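(* For every positive integer $k$, $$E_{2k}\left(\tau+\tfrac{1}{2}\right)=-E_{2k}(\tau)+(2^{2k}+2)E_{2k}(2\tau)-2^{2k}E_{2k}(4\tau).$$ For $p=3$ or $11$ and every integer $k\ge0$, \begin{align*} E_{2k+1}^{0}\left(\tau+\tfrac{1}{2};\chi_{p}\right)&=-E_{2k+1}^{0}(\tau;\chi_{p})+(2^{2k+1}-2)E_{2k+1}^{0}(2\tau;\chi_{p})+2^{2k+1}E_{2k+1}^{0}(4\tau;\chi_{p}),\\ E_{2k+1}^{\infty}\left(\tau+\tfrac{1}{2};\chi_{p}\right)&=-E_{2k+1}^{\infty}(\tau;\chi_{p})+(2-2^{2k+1})E_{2k+1}^{\infty}(2\tau;\chi_{p})+2^{2k+1}E_{2k+1}^{\infty}(4\tau;\chi_{p}). \end{align*} For $p=7$ or $23$ and every integer $k\ge0$, \begin{align*} E_{2k+1}^{0}\left(\tau+\tfrac{1}{2};\chi_{p}\right)&=-E_{2k+1}^{0}(\tau;\chi_{p})+(2^{2k+1}+2)E_{2k+1}^{0}(2\tau;\chi_{p})-2^{2k+1}E_{2k+1}^{0}(4\tau;\chi_{p}),\\ E_{2k+1}^{\infty}\left(\tau+\tfrac{1}{2};\chi_{p}\right)&=-E_{2k+1}^{\infty}(\tau;\chi_{p})+(2^{2k+1}+2)E_{2k+1}^{\infty}(2\tau;\chi_{p})-2^{2k+1}E_{2k+1}^{\infty}(4\tau;\chi_{p}). \end{align*}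
   Context: $\tau$ lies in the complex upper half-plane and $q=e^{2\pi i\tau}$. Bernoulli numbers $\mathcal{B}_k$: $\frac{u}{e^u-1}=\sum_{k\ge0}\mathcal{B}_k\frac{u^k}{k!}$. For $k\ge1$, $E_{2k}(\tau)=1-\frac{4k}{\mathcal{B}_{2k}}\sum_{j=1}^{\infty}\frac{j^{2k-1}q^{j}}{1-q^{j}}$. For an odd prime $p$ let $\chi_p(j)=\left(\frac{j}{p}\right)$ (Legendre symbol), and define generalized Bernoulli numbers $\mathcal{B}_{k,p}$ by $\frac{x}{e^{px}-1}\sum_{j=1}^{p-1}\chi_p(j)e^{jx}=\sum_{k\ge0}\mathcal{B}_{k,p}\frac{x^k}{k!}$. For a positive integer $k$ with $k\equiv\frac{p-1}{2}\pmod 2$ set $$E_{k}^{0}(\tau;\chi_{p})=\delta_{k,1}-\frac{2k}{\mathcal{B}_{k,p}}\sum_{j=1}^{\infty}\frac{j^{k-1}}{1-q^{pj}}\sum_{\ell=1}^{p-1}\left(\frac{\ell}{p}\right)q^{j\ell},\qquad E_{k}^{\infty}(\tau;\chi_{p})=1-\frac{2k}{\mathcal{B}_{k,p}}\sum_{j=1}^{\infty}\left(\frac{j}{p}\right)\frac{j^{k-1}q^{j}}{1-q^{j}},$$ with $\delta$ the Kronecker delta. (For $p\in\{3,7,11,23\}$, $\frac{p-1}{2}$ is odd, so these are defined for all odd $k$.) *)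

theory Defs
  imports "HOL-Analysis.Analysis" "HOL-Number_Theory.Number_Theory"
    "HOL-Computational_Algebra.Formal_Power_Series"
begin

definition qq :: "complex \<Rightarrow> complex" where
  "qq \<tau> = exp (2 * of_real pi * \<i> * \<tau>)"

definition bern :: "nat \<Rightarrow> real" where
  "bern k = fact k * fps_nth (fps_X div (fps_exp 1 - 1)) k"

definition chi :: "nat \<Rightarrow> int \<Rightarrow> real" where
  "chi p j = of_int (Legendre j (int p))"

text \<open>Generalized Bernoulli numbers:
  x/(e^(px) - 1) * sum_{j=1}^{p-1} chi_p(j) e^(jx) = sum B_{k,p} x^k/k!\<close>
definition bern_chi :: "nat \<Rightarrow> nat \<Rightarrow> real" where
  "bern_chi k p = fact k * fps_nth
     ((fps_X div (fps_exp (real p) - 1)) *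
      (\<Sum>j=1..p-1. fps_const (chi p (int j)) * fps_exp (real j))) k"

definition eis :: "nat \<Rightarrow> complex \<Rightarrow> complex" where
  "eis w \<tau> = 1 - (2 * of_nat w / of_real (bern w)) *
     (\<Sum>j. of_nat (Suc j) ^ (w - 1) * qq \<tau> ^ Suc j / (1 - qq \<tau> ^ Suc j))"

definition eis0 :: "nat \<Rightarrow> nat \<Rightarrow> complex \<Rightarrow> complex" where
  "eis0 p k \<tau> = (if k = 1 then 1 else 0) - (2 * of_nat k / of_real (bern_chi k p)) *
     (\<Sum>j. of_nat (Suc j) ^ (k - 1) / (1 - qq \<tau> ^ (p * Suc j)) *
        (\<Sum>l=1..p-1. of_real (chi p (int l)) * qq \<tau> ^ (Suc j * l)))"

definition eisinf :: "nat \<Rightarrow> nat \<Rightarrow> complex \<Rightarrow> complex" where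
  "eisinf p k \<tau> = 1 - (2 * of_nat k / of_real (bern_chi k p)) *
     (\<Sum>j. of_real (chi p (int (Suc j))) * of_nat (Suc j) ^ (k - 1) * qq \<tau> ^ Suc j
            / (1 - qq \<tau> ^ Suc j))"

end

theory Submission
  imports Defs
begin

text \<open>
  With \<open>q = e^{2\<pi>i\<tau>}\<close> the shift \<open>\<tau> \<mapsto> \<tau> + 1/2\<close> is \<open>q \<mapsto> -q\<close>, and each series is
  \<open>L(q) = \<Sum>\<^sub>n\<^sub>\<ge>\<^sub>1 a(n) n^s Y(q^n)\<close> with \<open>a(2n) = a(2) a(n)\<close>. Splitting into even and odd \<open>n\<close>,
  the even part of \<open>L(\<plusminus>q)\<close> is \<open>a(2) 2^s L(q^2)\<close>, and on odd \<open>n\<close> the identity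
  \<open>Y(-x) = -Y(x) + d Y(x^2)\<close> expresses the odd part of \<open>L(-q)\<close> through those of \<open>L(q)\<close> and
  \<open>L(q^2)\<close>; eliminating the odd parts gives a linear relation between \<open>L(-q), L(q), L(q^2), L(q^4)\<close>.
  For \<open>Y(x) = x/(1-x)\<close> one has \<open>d = 2\<close>; for \<open>Y(x) = \<Sum>\<^sub>m\<^sub>\<ge>\<^sub>1 \<chi>\<^sub>p(m) x^m\<close> only even \<open>m\<close> survive in
  \<open>Y(x) + Y(-x)\<close>, giving \<open>d = 2\<chi>\<^sub>p(2)\<close>. The four primes differ only in \<open>\<chi>\<^sub>p(2) = \<plusminus>1\<close>.
\<close>

lemma Legendre_eqI:
  assumes p: "prime p" "2 < p" and l: "l \<in> {-1, 0, 1}"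
    and cong: "[a ^ ((p - 1) div 2) = l] (mod int p)"
  shows "Legendre a (int p) = l"
proof -
  have "[Legendre a (int p) = l] (mod int p)"
    using cong_trans[OF euler_criterion[OF p] cong] .
  then have "int p dvd Legendre a (int p) - l"
    by (simp add: cong_iff_dvd_diff)
  moreover have "Legendre a (int p) \<in> {-1, 0, 1}"
    by (simp add: Legendre_def)
  ultimately show ?thesis
    using p(2) l dvd_imp_le_int[of "Legendre a (int p) - l" "int p"] by auto
qed

lemma Legendre_mult:
  assumes "prime p" "2 < p"
  shows "Legendre (a * b) (int p) = Legendre a (int p) * Legendre b (int p)"
proof (rule Legendre_eqI[OF assms])
  show "Legendre a (int p) * Legendre b (int p) \<in> {-1, 0, 1}"
    by (auto simp: Legendre_def)
  have "[a ^ ((p - 1) div 2) * b ^ ((p - 1) div 2) = Legendre a (int p) * Legendre b (int p)] (mod int p)"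
    using euler_criterion[OF assms] by (intro cong_mult) (simp_all add: cong_sym)
  then show "[(a * b) ^ ((p - 1) div 2) = Legendre a (int p) * Legendre b (int p)] (mod int p)"
    by (simp add: power_mult_distrib)
qed

lemma chi_mult: "prime p \<Longrightarrow> 2 < p \<Longrightarrow> chi p (a * b) = chi p a * chi p b"
  by (simp add: chi_def Legendre_mult)

lemma chi_add_period: "chi p (a + int p) = chi p a"
  by (simp add: chi_def Legendre_def QuadRes_def cong_def)

lemma chi_0 [simp]: "chi p 0 = 0"
  by (simp add: chi_def Legendre_def)

lemma abs_chi_le_1: "\<bar>chi p a\<bar> \<le> 1"
  by (simp add: chi_def Legendre_def)

lemma chi_two: "chi 3 2 = -1" "chi 11 2 = -1" "chi 7 2 = 1" "chi 23 2 = 1"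
proof -
  have "Legendre 2 (int 3) = -1" "Legendre 2 (int 11) = -1"
    "Legendre 2 (int 7) = 1" "Legendre 2 (int 23) = 1"
    by (rule Legendre_eqI; simp add: cong_def)+
  then show "chi 3 2 = -1" "chi 11 2 = -1" "chi 7 2 = 1" "chi 23 2 = 1"
    by (simp_all add: chi_def)
qed

text \<open>The closed form of \<open>\<Sum>\<^sub>m\<^sub>\<ge>\<^sub>1 \<chi>\<^sub>p(m) x^m\<close>, by \<open>p\<close>-periodicity of \<open>\<chi>\<^sub>p\<close>.\<close>

definition chi_generating_function :: "nat \<Rightarrow> complex \<Rightarrow> complex" where
  "chi_generating_function p x = (\<Sum>l<p. of_real (chi p (int l)) * x ^ l) / (1 - x ^ p)"

lemma chi_polynomial_times_one_plus_power:
  fixes y :: complex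
  shows "(\<Sum>l<p. of_real (chi p (int l)) * y ^ l) * (1 + y ^ p)
           = (\<Sum>l<2 * p. of_real (chi p (int l)) * y ^ l)"
proof -
  have split: "(\<Sum>l<2 * p. g l) = (\<Sum>l<p. g l) + (\<Sum>l<p. g (l + p))" for g :: "nat \<Rightarrow> complex"
    using sum.atLeastLessThan_concat[of 0 p "2 * p" g] sum.shift_bounds_nat_ivl[of g 0 p p]
    by (simp add: atLeast0LessThan mult_2)
  show ?thesis
    unfolding split by (simp add: chi_add_period power_add sum_distrib_left sum_distrib_right sum.distrib algebra_simps)
qed

lemma sum_power_plus_sum_neg_power:
  fixes f :: "nat \<Rightarrow> 'a::comm_ring_1"
  shows "(\<Sum>l<2 * n. f l * y ^ l) + (\<Sum>l<2 * n. f l * (- y) ^ l) = 2 * (\<Sum>m<n. f (2 * m) * (y ^ 2) ^ m)"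
proof -
  have "(\<Sum>l<2 * n. f l * y ^ l) + (\<Sum>l<2 * n. f l * (- y) ^ l) = (\<Sum>l<n * 2. f l * (y ^ l + (- y) ^ l))"
    by (simp add: sum.distrib algebra_simps)
  also have "\<dots> = (\<Sum>m<n. \<Sum>l\<in>{m * 2..<m * 2 + 2}. f l * (y ^ l + (- y) ^ l))"
    by (rule sum.nat_group[symmetric])
  also have "\<dots> = (\<Sum>m<n. 2 * (f (2 * m) * (y ^ 2) ^ m))"
  proof (rule sum.cong)
    fix m
    have "{m * 2..<m * 2 + 2} = {2 * m, Suc (2 * m)}"
      by auto
    then show "(\<Sum>l\<in>{m * 2..<m * 2 + 2}. f l * (y ^ l + (- y) ^ l)) = 2 * (f (2 * m) * (y ^ 2) ^ m)"
      by (simp add: power_mult)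
  qed simp
  finally show ?thesis
    by (simp add: sum_distrib_left)
qed

lemma chi_polynomial_neg:
  fixes x :: complex
  assumes p: "prime p" "2 < p"
  shows "(\<Sum>l<p. of_real (chi p (int l)) * (- x) ^ l) * (1 - x ^ p)
           + (\<Sum>l<p. of_real (chi p (int l)) * x ^ l) * (1 + x ^ p)
         = 2 * of_real (chi p 2) * (\<Sum>l<p. of_real (chi p (int l)) * (x ^ 2) ^ l)"
proof -
  have "odd p"
    using p prime_odd_nat by blast
  then have "1 - x ^ p = 1 + (- x) ^ p"
    by simp
  then have "(\<Sum>l<p. of_real (chi p (int l)) * (- x) ^ l) * (1 - x ^ p)
           + (\<Sum>l<p. of_real (chi p (int l)) * x ^ l) * (1 + x ^ p)
      = (\<Sum>l<2 * p. of_real (chi p (int l)) * x ^ l) + (\<Sum>l<2 * p. of_real (chi p (int l)) * (- x) ^ l)"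
    by (simp only: chi_polynomial_times_one_plus_power add.commute)
  also have "\<dots> = 2 * (\<Sum>m<p. of_real (chi p (int (2 * m))) * (x ^ 2) ^ m)"
    by (rule sum_power_plus_sum_neg_power)
  also have "\<dots> = 2 * of_real (chi p 2) * (\<Sum>l<p. of_real (chi p (int l)) * (x ^ 2) ^ l)"
    using chi_mult[OF p, of 2] by (simp add: sum_distrib_left mult.assoc)
  finally show ?thesis .
qed

lemma chi_generating_function_neg:
  assumes p: "prime p" "2 < p" and x: "norm x < 1"
  shows "chi_generating_function p (- x)
           = - chi_generating_function p x + 2 * of_real (chi p 2) * chi_generating_function p (x ^ 2)"
proof -
  define P where "P y = (\<Sum>l<p. of_real (chi p (int l)) * y ^ l)" for y :: complex
  have "odd p"
    using p prime_odd_nat by blast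
  then have neg: "(- x) ^ p = - (x ^ p)"
    by simp
  have "norm (x ^ p) < 1"
    using x p(2) by (simp add: norm_power power_less_one_iff)
  then have nonzero: "1 - x ^ p \<noteq> 0" "1 + x ^ p \<noteq> 0"
    by (auto simp: add_eq_0_iff dest: sym)
  have "(x ^ 2) ^ p = (x ^ p) ^ 2"
    by (metis power_mult mult.commute)
  then have denominator: "(1 + x ^ p) * (1 - x ^ p) = 1 - (x ^ 2) ^ p"
    by (simp add: power2_eq_square algebra_simps)
  have "chi_generating_function p (- x) + chi_generating_function p x
      = (P (- x) * (1 - x ^ p) + P x * (1 + x ^ p)) / ((1 + x ^ p) * (1 - x ^ p))"
    using nonzero unfolding chi_generating_function_def P_def[symmetric] neg diff_minus_eq_add
    by (simp add: add_frac_eq)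
  also have "\<dots> = 2 * of_real (chi p 2) * chi_generating_function p (x ^ 2)"
    unfolding P_def chi_polynomial_neg[OF p] denominator chi_generating_function_def by simp
  finally show ?thesis
    by (simp add: algebra_simps)
qed

lemma geometric_quotient_neg:
  fixes x :: complex
  assumes "norm x < 1"
  shows "- x / (1 - - x) = - (x / (1 - x)) + 2 * (x ^ 2 / (1 - x ^ 2))"
proof -
  have nonzero: "1 - x \<noteq> 0" "1 + x \<noteq> 0"
    using assms by (auto simp: add_eq_0_iff dest: sym)
  have "- x / (1 - - x) = - x * (1 - x) / ((1 - x) * (1 + x))"
    using nonzero by simp
  also have "\<dots> = (- (x * (1 + x)) + 2 * x ^ 2) / ((1 - x) * (1 + x))"
    by (simp add: algebra_simps power2_eq_square)
  also have "\<dots> = - (x * (1 + x) / ((1 - x) * (1 + x))) + 2 * (x ^ 2 / ((1 - x) * (1 + x)))"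
    by (simp only: add_divide_distrib minus_divide_left times_divide_eq_right)
  also have "(1 - x) * (1 + x) = 1 - x ^ 2"
    by (simp add: algebra_simps power2_eq_square)
  also have "x * (1 + x) / (1 - x ^ 2) = x / (1 - x)"
    using nonzero by (simp add: \<open>(1 - x) * (1 + x) = 1 - x ^ 2\<close>[symmetric])
  finally show ?thesis .
qed

lemma norm_power_le_norm:
  fixes x :: "'a::real_normed_div_algebra"
  assumes "norm x \<le> 1" "1 \<le> n"
  shows "norm (x ^ n) \<le> norm x"
  using power_decreasing[OF assms(2) norm_ge_zero assms(1)] by (simp add: norm_power)

lemma norm_one_minus_power_ge:
  fixes x :: complex
  assumes "norm x \<le> 1" "1 \<le> n"
  shows "1 - norm x \<le> norm (1 - x ^ n)"
proof -
  have "1 - norm (x ^ n) \<le> norm (1 - x ^ n)"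
    by (metis norm_one norm_triangle_ineq2)
  with norm_power_le_norm[OF assms] show ?thesis
    by simp
qed

lemma norm_geometric_quotient_le:
  fixes x :: complex
  assumes "norm x \<le> r" "r < 1"
  shows "norm (x / (1 - x)) \<le> 1 / (1 - r) * norm x"
proof -
  have "1 - r \<le> norm (1 - x)"
    using norm_one_minus_power_ge[of x 1] assms by simp
  then have "norm x / norm (1 - x) \<le> norm x / (1 - r)"
    using assms by (intro frac_le) auto
  then show ?thesis
    by (simp add: norm_divide)
qed

lemma norm_chi_generating_function_le:
  assumes "norm x \<le> r" "r < 1" "1 \<le> p"
  shows "norm (chi_generating_function p x) \<le> real p / (1 - r) * norm x"
proof -
  have "norm (\<Sum>l<p. of_real (chi p (int l)) * x ^ l) \<le> (\<Sum>l<p. norm x)"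
  proof (rule order_trans[OF norm_sum sum_mono])
    fix l
    show "norm (of_real (chi p (int l)) * x ^ l) \<le> norm x"
    proof (cases "l = 0")
      case False
      then have "norm (x ^ l) \<le> norm x"
        using assms by (intro norm_power_le_norm) simp_all
      then have "\<bar>chi p (int l)\<bar> * norm (x ^ l) \<le> 1 * norm x"
        using abs_chi_le_1[of p "int l"] by (intro mult_mono) auto
      then show ?thesis
        by (simp add: norm_mult)
    qed simp
  qed
  moreover have "1 - r \<le> norm (1 - x ^ p)"
    using norm_one_minus_power_ge[of x p] assms by simp
  ultimately have "norm (chi_generating_function p x) \<le> real p * norm x / (1 - r)"
    unfolding chi_generating_function_def norm_divide using assms by (intro frac_le) auto
  then show ?thesis
    by simp
qed

lemma summable_real_power_mult_geometric:
  assumes "0 \<le> r" "r < 1"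
  shows "summable (\<lambda>n. real n ^ s * r ^ n)"
proof -
  have "(\<lambda>n. (real n / real (Suc n)) ^ s) \<longlonglongrightarrow> 1 ^ s"
    by (intro tendsto_power LIMSEQ_n_over_Suc_n)
  then have "(\<lambda>n. norm (real n ^ s) / norm (real (Suc n) ^ s)) \<longlonglongrightarrow> 1"
    by (simp add: power_divide)
  then have "conv_radius (\<lambda>n. real n ^ s) = ereal 1"
    by (rule conv_radius_ratio_limit_nonzero[OF refl, rotated]) simp
  then have "summable (\<lambda>n. norm (real n ^ s * r ^ n))"
    using assms by (intro abs_summable_in_conv_radius) simp
  then show ?thesis
    using assms by simp
qed

lemma summable_norm_even_odd:
  fixes F :: "nat \<Rightarrow> 'a::real_normed_vector"
  assumes "summable (\<lambda>n. norm (F n))"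
  shows "summable (\<lambda>n. norm (F (2 * n)))" "summable (\<lambda>n. norm (F (2 * n + 1)))"
proof -
  have "summable (\<lambda>n. norm (F (2 * n + i)))" if "i < 2" for i
  proof -
    let ?G = "\<lambda>n. if n mod 2 = i then norm (F n) else 0"
    have "summable ?G"
      by (rule summable_comparison_test'[OF assms, of 0]) simp
    moreover have "?G n = 0" if "n \<notin> range (\<lambda>n. 2 * n + i)" for n
    proof (rule ccontr)
      assume "?G n \<noteq> 0"
      then have "n = 2 * (n div 2) + i"
        by (metis div_mult_mod_eq mult.commute)
      with that show False
        by blast
    qed
    ultimately have "summable (\<lambda>n. ?G (2 * n + i))"
      by (subst summable_mono_reindex) (auto simp: strict_mono_def)
    then show ?thesis
      using that by simp
  qed
  from this[of 0] this[of 1] show "summable (\<lambda>n. norm (F (2 * n)))" "summable (\<lambda>n. norm (F (2 * n + 1)))"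
    by simp_all
qed

lemma suminf_even_odd:
  fixes F :: "nat \<Rightarrow> 'a::banach"
  assumes "summable (\<lambda>n. norm (F n))"
  shows "suminf F = (\<Sum>n. F (2 * n)) + (\<Sum>n. F (2 * n + 1))"
proof -
  have "(\<lambda>n. \<Sum>i\<in>{n * 2..<n * 2 + 2}. F i) sums suminf F"
    by (rule sums_group[OF summable_sums[OF summable_norm_cancel[OF assms]]]) simp
  moreover have "(\<Sum>i\<in>{n * 2..<n * 2 + 2}. F i) = F (2 * n) + F (2 * n + 1)" for n
  proof -
    have "{n * 2..<n * 2 + 2} = {2 * n, 2 * n + 1}"
      by auto
    then show ?thesis
      by simp
  qed
  ultimately have "(\<lambda>n. F (2 * n) + F (2 * n + 1)) sums suminf F"
    by simp
  moreover have "(\<lambda>n. F (2 * n) + F (2 * n + 1)) sums ((\<Sum>n. F (2 * n)) + (\<Sum>n. F (2 * n + 1)))"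
    using summable_norm_even_odd[OF assms, THEN summable_norm_cancel] by (intro sums_add summable_sums)
  ultimately show ?thesis
    by (rule sums_unique2)
qed

definition lambert_term :: "(nat \<Rightarrow> complex) \<Rightarrow> (complex \<Rightarrow> complex) \<Rightarrow> nat \<Rightarrow> complex \<Rightarrow> nat \<Rightarrow> complex" where
  "lambert_term a Y s q n = a n * of_nat n ^ s * Y (q ^ n)"

definition lambert_series :: "(nat \<Rightarrow> complex) \<Rightarrow> (complex \<Rightarrow> complex) \<Rightarrow> nat \<Rightarrow> complex \<Rightarrow> complex" where
  "lambert_series a Y s q = (\<Sum>j. lambert_term a Y s q (Suc j))"

lemma summable_norm_lambert_term:
  assumes q: "norm q < 1"
    and a_bound: "\<And>n. norm (a n) \<le> A"
    and Y_bound: "\<And>x. norm x \<le> norm q \<Longrightarrow> norm (Y x) \<le> B * norm x"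
  shows "summable (\<lambda>j. norm (lambert_term a Y s q (Suc j)))"
proof (rule summable_comparison_test'[where N = 0])
  have "summable (\<lambda>n. A * B * (real n ^ s * norm q ^ n))"
    using q by (intro summable_mult summable_real_power_mult_geometric) simp_all
  then show "summable (\<lambda>j. A * B * (real (Suc j) ^ s * norm q ^ Suc j))"
    by (rule summable_Suc_iff[THEN iffD2])
next
  fix j
  have "norm (q ^ Suc j) \<le> norm q"
    using q by (intro norm_power_le_norm) simp_all
  from Y_bound[OF this] have "norm (Y (q ^ Suc j)) \<le> B * norm q ^ Suc j"
    by (simp only: norm_power)
  moreover have "0 \<le> A"
    using a_bound[of 0] norm_ge_zero order_trans by blast
  ultimately have "norm (a (Suc j)) * real (Suc j) ^ s * norm (Y (q ^ Suc j))
      \<le> A * real (Suc j) ^ s * (B * norm q ^ Suc j)"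
    using a_bound by (intro mult_mono) simp_all
  also have "\<dots> = A * B * (real (Suc j) ^ s * norm q ^ Suc j)"
    by (simp only: ac_simps)
  finally show "norm (norm (lambert_term a Y s q (Suc j))) \<le> A * B * (real (Suc j) ^ s * norm q ^ Suc j)"
    by (simp only: lambert_term_def norm_mult norm_power norm_of_nat real_norm_def abs_mult power_abs abs_norm_cancel abs_of_nat)
qed

lemma lambert_series_split_even_odd:
  assumes q: "norm q < 1"
    and a_bound: "\<And>n. norm (a n) \<le> A"
    and a_mult: "\<And>n. a (2 * n) = a 2 * a n"
    and Y_bound: "\<And>x. norm x \<le> norm q \<Longrightarrow> norm (Y x) \<le> B * norm x"
  shows "lambert_series a Y s q
           = (\<Sum>j. lambert_term a Y s q (2 * j + 1)) + a 2 * 2 ^ s * lambert_series a Y s (q ^ 2)"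
proof -
  have "norm (q ^ 2) \<le> norm q"
    using q by (intro norm_power_le_norm) simp_all
  then have "summable (\<lambda>j. norm (lambert_term a Y s (q ^ 2) (Suc j)))"
    using q Y_bound by (intro summable_norm_lambert_term[OF _ a_bound, where B = B]) auto
  then have summable_square: "summable (\<lambda>j. lambert_term a Y s (q ^ 2) (Suc j))"
    by (rule summable_norm_cancel)
  have even: "lambert_term a Y s q (Suc (2 * j + 1)) = a 2 * 2 ^ s * lambert_term a Y s (q ^ 2) (Suc j)" for j
  proof -
    have index: "Suc (2 * j + 1) = 2 * Suc j"
      by simp
    show ?thesis
      unfolding index lambert_term_def a_mult power_mult of_nat_mult of_nat_numeral power_mult_distrib
      by (simp only: ac_simps)
  qed
  have "lambert_series a Y s q
      = (\<Sum>j. lambert_term a Y s q (Suc (2 * j))) + (\<Sum>j. lambert_term a Y s q (Suc (2 * j + 1)))"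
    unfolding lambert_series_def using summable_norm_lambert_term[OF q a_bound Y_bound]
    by (rule suminf_even_odd)
  also have "(\<Sum>j. lambert_term a Y s q (Suc (2 * j + 1))) = a 2 * 2 ^ s * lambert_series a Y s (q ^ 2)"
    unfolding even lambert_series_def by (rule suminf_mult[OF summable_square])
  finally show ?thesis
    by simp
qed

lemma lambert_term_neg_odd:
  assumes q: "norm q < 1"
    and Y_neg: "\<And>x. norm x < 1 \<Longrightarrow> Y (- x) = - Y x + d * Y (x ^ 2)"
  shows "lambert_term a Y s (- q) (2 * j + 1)
           = - lambert_term a Y s q (2 * j + 1) + d * lambert_term a Y s (q ^ 2) (2 * j + 1)"
proof -
  define n where "n = 2 * j + 1"
  have "norm (q ^ n) < 1"
    using norm_power_le_norm[of q n] q by (simp add: n_def)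
  moreover have "(q ^ 2) ^ n = (q ^ n) ^ 2"
    by (metis power_mult mult.commute)
  ultimately have Y_odd: "Y (- (q ^ n)) = - Y (q ^ n) + d * Y ((q ^ 2) ^ n)"
    using Y_neg by simp
  have "(- q) ^ n = - (q ^ n)"
    by (simp add: n_def)
  then show ?thesis
    unfolding lambert_term_def n_def[symmetric] \<open>(- q) ^ n = - (q ^ n)\<close> Y_odd
    by (simp add: algebra_simps)
qed

lemma lambert_series_neg:
  assumes q: "norm q < 1"
    and a_bound: "\<And>n. norm (a n) \<le> A"
    and a_mult: "\<And>n. a (2 * n) = a 2 * a n"
    and Y_bound: "\<And>x. norm x \<le> norm q \<Longrightarrow> norm (Y x) \<le> B * norm x"
    and Y_neg: "\<And>x. norm x < 1 \<Longrightarrow> Y (- x) = - Y x + d * Y (x ^ 2)"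
  shows "lambert_series a Y s (- q)
           = - lambert_series a Y s q + (2 * (a 2 * 2 ^ s) + d) * lambert_series a Y s (q ^ 2)
             - d * (a 2 * 2 ^ s) * lambert_series a Y s (q ^ 4)"
proof -
  define c where "c = a 2 * 2 ^ s"
  define L where "L = lambert_series a Y s"
  define Odd where "Odd r = (\<Sum>j. lambert_term a Y s r (2 * j + 1))" for r
  have split: "L r = Odd r + c * L (r ^ 2)" if "norm r \<le> norm q" for r
    unfolding L_def Odd_def c_def using that q Y_bound
    by (intro lambert_series_split_even_odd[OF _ a_bound a_mult, where B = B]) auto
  have summable_odd: "summable (\<lambda>j. lambert_term a Y s r (2 * j + 1))" if "norm r \<le> norm q" for r
  proof -
    have "summable (\<lambda>j. norm (lambert_term a Y s r (Suc j)))"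
      using that q Y_bound by (intro summable_norm_lambert_term[OF _ a_bound, where B = B]) auto
    from summable_norm_even_odd(1)[OF this] show ?thesis
      by (simp add: summable_norm_cancel)
  qed
  have radius: "norm (q ^ 2) \<le> norm q"
    using q by (simp add: norm_power_le_norm)
  have odd_neg: "lambert_term a Y s (- q) (2 * j + 1)
      = - lambert_term a Y s q (2 * j + 1) + d * lambert_term a Y s (q ^ 2) (2 * j + 1)" for j
    using q Y_neg by (rule lambert_term_neg_odd)
  have "(\<lambda>j. - lambert_term a Y s q (2 * j + 1) + d * lambert_term a Y s (q ^ 2) (2 * j + 1))
      sums (- Odd q + d * Odd (q ^ 2))"
    unfolding Odd_def using summable_odd[of q] summable_odd[OF radius]
    by (intro sums_add sums_minus sums_mult summable_sums) simp_all
  then have "Odd (- q) = - Odd q + d * Odd (q ^ 2)"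
    unfolding Odd_def odd_neg by (rule sums_unique[symmetric])
  moreover have "L (- q) = Odd (- q) + c * L (q ^ 2)" "L q = Odd q + c * L (q ^ 2)"
    "L (q ^ 2) = Odd (q ^ 2) + c * L (q ^ 4)"
    using split[of "- q"] split[of q] split[OF radius] by (simp_all flip: power_mult)
  ultimately show ?thesis
    unfolding L_def[symmetric] c_def[symmetric] by (simp add: algebra_simps)
qed

lemma qq_half_shift: "qq (\<tau> + 1/2) = - qq \<tau>"
proof -
  have "2 * of_real pi * \<i> * (\<tau> + 1/2) = 2 * of_real pi * \<i> * \<tau> + of_real pi * \<i>"
    by (simp add: algebra_simps)
  then show ?thesis
    unfolding qq_def by (simp add: exp_add)
qed

lemma qq_of_nat_mult: "qq (of_nat m * \<tau>) = qq \<tau> ^ m"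
proof -
  have "2 * of_real pi * \<i> * (of_nat m * \<tau>) = of_nat m * (2 * of_real pi * \<i> * \<tau>)"
    by (simp add: algebra_simps)
  then show ?thesis
    unfolding qq_def by (metis exp_of_nat_mult)
qed

lemma norm_qq_less_1: "0 < Im \<tau> \<Longrightarrow> norm (qq \<tau>) < 1"
  by (simp add: qq_def)

text \<open>The constant term \<open>e\<close> is compatible with the relation only if \<open>\<alpha> - \<beta> = 2\<close> or \<open>e = 0\<close>;
  for \<open>E\<^sup>0\<close> of weight \<open>k > 1\<close> it is the latter.\<close>

lemma affine_lambert_half_shift:
  fixes L :: "complex \<Rightarrow> complex" and e K \<alpha> \<beta> :: complex
  assumes L: "L (- qq \<tau>) = - L (qq \<tau>) + \<alpha> * L (qq \<tau> ^ 2) - \<beta> * L (qq \<tau> ^ 4)"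
    and e: "e * (\<alpha> - \<beta> - 2) = 0"
  shows "e - K * L (qq (\<tau> + 1/2))
           = - (e - K * L (qq \<tau>)) + \<alpha> * (e - K * L (qq (2 * \<tau>))) - \<beta> * (e - K * L (qq (4 * \<tau>)))"
proof -
  have powers: "qq (2 * \<tau>) = qq \<tau> ^ 2" "qq (4 * \<tau>) = qq \<tau> ^ 4"
    using qq_of_nat_mult[of 2 \<tau>] qq_of_nat_mult[of 4 \<tau>] by simp_all
  have "- (e - K * L (qq \<tau>)) + \<alpha> * (e - K * L (qq (2 * \<tau>))) - \<beta> * (e - K * L (qq (4 * \<tau>)))
      = e * (\<alpha> - \<beta> - 2) + e - K * L (qq (\<tau> + 1/2))"
    unfolding qq_half_shift L powers by (simp add: algebra_simps)
  then show ?thesis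
    unfolding e by simp
qed

lemma eis_half_shift:
  assumes \<tau>: "0 < Im \<tau>" and w: "1 \<le> w"
  shows "eis w (\<tau> + 1/2) = - eis w \<tau> + (2 ^ w + 2) * eis w (2 * \<tau>) - 2 ^ w * eis w (4 * \<tau>)"
proof -
  define L where "L = lambert_series (\<lambda>_. 1) (\<lambda>x. x / (1 - x)) (w - 1)"
  obtain m where m: "w = Suc m"
    using w by (cases w) simp_all
  moreover have "L (- qq \<tau>) = - L (qq \<tau>) + (2 * (1 * 2 ^ (w - 1)) + 2) * L (qq \<tau> ^ 2)
      - 2 * (1 * 2 ^ (w - 1)) * L (qq \<tau> ^ 4)"
  proof -
    have "norm (x / (1 - x)) \<le> 1 / (1 - norm (qq \<tau>)) * norm x" if "norm x \<le> norm (qq \<tau>)" for x :: complex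
      using that norm_qq_less_1[OF \<tau>] by (rule norm_geometric_quotient_le)
    from lambert_series_neg[OF norm_qq_less_1[OF \<tau>] _ _ this geometric_quotient_neg, where A = 1]
    show ?thesis
      unfolding L_def by simp
  qed
  ultimately have L_neg: "L (- qq \<tau>) = - L (qq \<tau>) + (2 ^ w + 2) * L (qq \<tau> ^ 2) - 2 ^ w * L (qq \<tau> ^ 4)"
    by (simp add: algebra_simps)
  have "eis w \<sigma> = 1 - 2 * of_nat w / of_real (bern w) * L (qq \<sigma>)" for \<sigma>
    by (simp add: eis_def L_def lambert_series_def lambert_term_def)
  then show ?thesis
    by (simp only:) (rule affine_lambert_half_shift[OF L_neg], simp)
qed

lemma eisinf_half_shift:
  assumes \<tau>: "0 < Im \<tau>" and p: "prime p" "2 < p" and k: "1 \<le> k"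
  shows "eisinf p k (\<tau> + 1/2) = - eisinf p k \<tau> + (of_real (chi p 2) * 2 ^ k + 2) * eisinf p k (2 * \<tau>)
           - of_real (chi p 2) * 2 ^ k * eisinf p k (4 * \<tau>)"
proof -
  define L where "L = lambert_series (\<lambda>n. of_real (chi p (int n))) (\<lambda>x. x / (1 - x)) (k - 1)"
  obtain m where m: "k = Suc m"
    using k by (cases k) simp_all
  moreover have "L (- qq \<tau>) = - L (qq \<tau>) + (2 * (of_real (chi p 2) * 2 ^ (k - 1)) + 2) * L (qq \<tau> ^ 2)
      - 2 * (of_real (chi p 2) * 2 ^ (k - 1)) * L (qq \<tau> ^ 4)"
  proof -
    have a_bound: "norm (of_real (chi p (int n)) :: complex) \<le> 1" for n
      using abs_chi_le_1[of p "int n"] by simp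
    have a_mult: "of_real (chi p (int (2 * n))) = (of_real (chi p (int 2)) * of_real (chi p (int n)) :: complex)" for n
      using chi_mult[OF p, of 2 "int n"] by simp
    have Y_bound: "norm (x / (1 - x)) \<le> 1 / (1 - norm (qq \<tau>)) * norm x" if "norm x \<le> norm (qq \<tau>)" for x :: complex
      using that norm_qq_less_1[OF \<tau>] by (rule norm_geometric_quotient_le)
    from lambert_series_neg[where a = "\<lambda>n. of_real (chi p (int n))",
        OF norm_qq_less_1[OF \<tau>] a_bound a_mult Y_bound geometric_quotient_neg]
    show ?thesis
      unfolding L_def by simp
  qed
  ultimately have L_neg: "L (- qq \<tau>) = - L (qq \<tau>) + (of_real (chi p 2) * 2 ^ k + 2) * L (qq \<tau> ^ 2)
      - of_real (chi p 2) * 2 ^ k * L (qq \<tau> ^ 4)"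
    by (simp add: algebra_simps)
  have "eisinf p k \<sigma> = 1 - 2 * of_nat k / of_real (bern_chi k p) * L (qq \<sigma>)" for \<sigma>
    by (simp add: eisinf_def L_def lambert_series_def lambert_term_def)
  then show ?thesis
    by (simp only:) (rule affine_lambert_half_shift[OF L_neg], simp)
qed

lemma sum_chi_power_eq_lessThan:
  "(\<Sum>l=1..p-1. of_real (chi p (int l)) * z ^ l) = (\<Sum>l<p. of_real (chi p (int l)) * (z::complex) ^ l)"
  by (rule sum.mono_neutral_left) (auto simp: not_le)

lemma eis0_half_shift:
  assumes \<tau>: "0 < Im \<tau>" and p: "prime p" "2 < p" and k: "1 \<le> k"
  shows "eis0 p k (\<tau> + 1/2) = - eis0 p k \<tau> + (2 ^ k + 2 * of_real (chi p 2)) * eis0 p k (2 * \<tau>)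
           - of_real (chi p 2) * 2 ^ k * eis0 p k (4 * \<tau>)"
proof -
  define L where "L = lambert_series (\<lambda>_. 1) (chi_generating_function p) (k - 1)"
  obtain m where m: "k = Suc m"
    using k by (cases k) simp_all
  moreover have "L (- qq \<tau>) = - L (qq \<tau>) + (2 * (1 * 2 ^ (k - 1)) + 2 * of_real (chi p 2)) * L (qq \<tau> ^ 2)
      - 2 * of_real (chi p 2) * (1 * 2 ^ (k - 1)) * L (qq \<tau> ^ 4)"
  proof -
    have "norm (chi_generating_function p x) \<le> real p / (1 - norm (qq \<tau>)) * norm x"
      if "norm x \<le> norm (qq \<tau>)" for x
      using that norm_qq_less_1[OF \<tau>] p(2) by (intro norm_chi_generating_function_le) simp_all
    from lambert_series_neg[OF norm_qq_less_1[OF \<tau>] _ _ this chi_generating_function_neg[OF p], where A = 1]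
    show ?thesis
      unfolding L_def by simp
  qed
  ultimately have L_neg: "L (- qq \<tau>) = - L (qq \<tau>) + (2 ^ k + 2 * of_real (chi p 2)) * L (qq \<tau> ^ 2)
      - of_real (chi p 2) * 2 ^ k * L (qq \<tau> ^ 4)"
    by (simp add: algebra_simps)
  have "of_nat (Suc j) ^ (k - 1) / (1 - qq \<sigma> ^ (p * Suc j))
        * (\<Sum>l=1..p-1. of_real (chi p (int l)) * qq \<sigma> ^ (Suc j * l))
      = lambert_term (\<lambda>_. 1) (chi_generating_function p) (k - 1) (qq \<sigma>) (Suc j)" for \<sigma> j
    unfolding lambert_term_def chi_generating_function_def mult.commute[of p] power_mult
      sum_chi_power_eq_lessThan by simp
  then have "eis0 p k \<sigma> = (if k = 1 then 1 else 0) - 2 * of_nat k / of_real (bern_chi k p) * L (qq \<sigma>)" for \<sigma>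
    unfolding eis0_def L_def lambert_series_def by simp
  then show ?thesis
    by (simp only:) (rule affine_lambert_half_shift[OF L_neg], simp)
qed

theorem lemma3p2:
  fixes \<tau> :: complex
  assumes "Im \<tau> > 0"
  shows "(\<forall>k::nat. k \<ge> 1 \<longrightarrow>
            eis (2*k) (\<tau> + 1/2) = - eis (2*k) \<tau> + (2 ^ (2*k) + 2) * eis (2*k) (2*\<tau>)
                                   - 2 ^ (2*k) * eis (2*k) (4*\<tau>))
       \<and> (\<forall>p\<in>{3, 11::nat}. \<forall>k::nat.
            eis0 p (2*k+1) (\<tau> + 1/2) = - eis0 p (2*k+1) \<tau>
               + (2 ^ (2*k+1) - 2) * eis0 p (2*k+1) (2*\<tau>) + 2 ^ (2*k+1) * eis0 p (2*k+1) (4*\<tau>)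
          \<and> eisinf p (2*k+1) (\<tau> + 1/2) = - eisinf p (2*k+1) \<tau>
               + (2 - 2 ^ (2*k+1)) * eisinf p (2*k+1) (2*\<tau>) + 2 ^ (2*k+1) * eisinf p (2*k+1) (4*\<tau>))
       \<and> (\<forall>p\<in>{7, 23::nat}. \<forall>k::nat.
            eis0 p (2*k+1) (\<tau> + 1/2) = - eis0 p (2*k+1) \<tau>
               + (2 ^ (2*k+1) + 2) * eis0 p (2*k+1) (2*\<tau>) - 2 ^ (2*k+1) * eis0 p (2*k+1) (4*\<tau>)
          \<and> eisinf p (2*k+1) (\<tau> + 1/2) = - eisinf p (2*k+1) \<tau>
               + (2 ^ (2*k+1) + 2) * eisinf p (2*k+1) (2*\<tau>) - 2 ^ (2*k+1) * eisinf p (2*k+1) (4*\<tau>))"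
proof (intro conjI ballI allI impI)
  fix k :: nat
  assume "1 \<le> k"
  then show "eis (2*k) (\<tau> + 1/2) = - eis (2*k) \<tau> + (2 ^ (2*k) + 2) * eis (2*k) (2*\<tau>)
      - 2 ^ (2*k) * eis (2*k) (4*\<tau>)"
    by (intro eis_half_shift[OF assms]) simp
next
  fix p k :: nat
  assume "p \<in> {3, 11}"
  then have p: "prime p" "2 < p" and "chi p 2 = -1"
    using chi_two by auto
  then show "eis0 p (2*k+1) (\<tau> + 1/2) = - eis0 p (2*k+1) \<tau>
      + (2 ^ (2*k+1) - 2) * eis0 p (2*k+1) (2*\<tau>) + 2 ^ (2*k+1) * eis0 p (2*k+1) (4*\<tau>)"
    and "eisinf p (2*k+1) (\<tau> + 1/2) = - eisinf p (2*k+1) \<tau>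
      + (2 - 2 ^ (2*k+1)) * eisinf p (2*k+1) (2*\<tau>) + 2 ^ (2*k+1) * eisinf p (2*k+1) (4*\<tau>)"
    using eis0_half_shift[OF assms p, of "2*k+1"] eisinf_half_shift[OF assms p, of "2*k+1"]
    by (simp_all add: algebra_simps)
next
  fix p k :: nat
  assume "p \<in> {7, 23}"
  then have p: "prime p" "2 < p" and "chi p 2 = 1"
    using chi_two by auto
  then show "eis0 p (2*k+1) (\<tau> + 1/2) = - eis0 p (2*k+1) \<tau>
      + (2 ^ (2*k+1) + 2) * eis0 p (2*k+1) (2*\<tau>) - 2 ^ (2*k+1) * eis0 p (2*k+1) (4*\<tau>)"
    and "eisinf p (2*k+1) (\<tau> + 1/2) = - eisinf p (2*k+1) \<tau>
      + (2 ^ (2*k+1) + 2) * eisinf p (2*k+1) (2*\<tau>) - 2 ^ (2*k+1) * eisinf p (2*k+1) (4*\<tau>)"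
    using eis0_half_shift[OF assms p, of "2*k+1"] eisinf_half_shift[OF assms p, of "2*k+1"]
    by (simp_all add: algebra_simps)
qed

end
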